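(* Define $F:\mathbb{N}\to\mathbb{N}$ by $F(n)=(n-1)/3$ if $n\equiv1\pmod 3$; $F(n)=n/2$ if $n\equiv 0$ or $n\equiv2\pmod 6$; $F(n)=(3n+1)/2$ if $n\equiv3$ or $n\equiv5\pmod6$. Then for every $n\in\mathbb{N}^+$ there exists $k\in\mathbb{N}$ with $F^k(n)=1$.
   Context: $F^k$ denotes the $k$-fold iterate of $F$. *)

theory Defs
  imports Main
begin

definition F :: "nat \<Rightarrow> nat" where
  "F n = (if n mod 3 = 1 then (n - 1) div 3
          else if n mod 6 = 0 \<or> n mod 6 = 2 then n div 2
          else (3 * n + 1) div 2)"

end

(*
  Every n >= 2 has an iterate in {1..<n}, so strong induction reaches 1. The only
  hard case is n = 3b + 2 with b odd. Write b + 1 = 2^j m with m odd, so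
  n = 3 * 2^j * m - 1: each of j steps of the branch (3x+1)/2 trades a factor 2
  for a factor 3, giving 3^(j+1) m - 1, and one halving gives (3^(j+1) m - 1)/2.
  For odd s the number (3s - 1)/2 is 1 mod 3, so the branch (x-1)/3 strips the
  powers of 3 again, arriving at (3m - 1)/2 and then at (m - 1)/2 <= b.
*)

theory Submission
  imports Defs "HOL-Computational_Algebra.Primes"
begin

lemma F_3_mult_plus_1: "F (3 * q + 1) = q"
  unfolding F_def by simp

lemma F_even:
  assumes "even n" and "n mod 3 \<noteq> 1"
  shows "F n = n div 2"
proof -
  have "n mod 6 = 0 \<or> n mod 6 = 2"
    using assms by presburger
  then show ?thesis
    using assms(2) by (auto simp: F_def)
qed

lemma F_odd:
  assumes "odd n" and "n mod 3 \<noteq> 1"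
  shows "F n = (3 * n + 1) div 2"
proof -
  have "n mod 6 \<noteq> 0 \<and> n mod 6 \<noteq> 2"
    using assms by presburger
  then show ?thesis
    using assms(2) by (simp add: F_def)
qed

lemma F_6_mult_pred: "c \<ge> 1 \<Longrightarrow> F (6 * c - 1) = 9 * c - 1"
proof -
  assume "c \<ge> 1"
  then obtain d where "c = d + 1"
    using add.commute le_Suc_ex by blast
  then have "6 * c - 1 = 6 * d + 5" and "9 * c - 1 = 9 * d + 8"
    by simp_all
  moreover have "F (6 * d + 5) = 9 * d + 8"
    by (subst F_odd) presburger+
  ultimately show ?thesis
    by simp
qed

lemma F_3_mult_pred: "odd t \<Longrightarrow> F (3 * t - 1) = (3 * t - 1) div 2"
proof (elim oddE)
  fix u
  assume "t = 2 * u + 1"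
  then have "3 * t - 1 = 6 * u + 2"
    by simp
  moreover have "even (6 * u + 2)" and "(6 * u + 2) mod 3 \<noteq> (1::nat)"
    by presburger+
  ultimately show ?thesis
    using F_even by simp
qed

lemma F_half_3_mult_pred: "odd s \<Longrightarrow> F ((3 * s - 1) div 2) = (s - 1) div 2"
proof (elim oddE)
  fix u
  assume "s = 2 * u + 1"
  then have "(3 * s - 1) div 2 = 3 * u + 1" and "(s - 1) div 2 = u"
    by simp_all
  then show ?thesis
    by (simp only: F_3_mult_plus_1)
qed

lemma funpow_F_3_mult_pow2_pred:
  "m \<ge> 1 \<Longrightarrow> (F ^^ j) (3 * 2 ^ j * m - 1) = 3 * 3 ^ j * m - 1"
proof (induction j arbitrary: m)
  case 0
  then show ?case by simp
next
  case (Suc j)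
  have "F (3 * 2 ^ Suc j * m - 1) = 3 * 2 ^ j * (3 * m) - 1"
    using F_6_mult_pred[of "2 ^ j * m"] Suc.prems by (simp add: algebra_simps)
  then have "(F ^^ Suc j) (3 * 2 ^ Suc j * m - 1) = (F ^^ j) (3 * 2 ^ j * (3 * m) - 1)"
    by (simp only: funpow_Suc_right comp_apply)
  also have "\<dots> = 3 * 3 ^ Suc j * m - 1"
    using Suc.IH[of "3 * m"] Suc.prems by (simp add: algebra_simps)
  finally show ?case .
qed

lemma funpow_F_half_pow3_mult_pred:
  "odd m \<Longrightarrow> (F ^^ i) ((3 ^ i * m - 1) div 2) = (m - 1) div 2"
proof (induction i)
  case 0
  then show ?case by simp
next
  case (Suc i)
  have "F ((3 ^ Suc i * m - 1) div 2) = (3 ^ i * m - 1) div 2"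
    using F_half_3_mult_pred[of "3 ^ i * m"] Suc.prems by (simp add: mult.assoc)
  then show ?case
    using Suc.IH[OF Suc.prems] by (simp only: funpow_Suc_right comp_apply)
qed

lemma funpow_F_3_mult_pow2_pred_odd:
  assumes "odd m"
  shows "(F ^^ (2 * j + 1)) (3 * 2 ^ j * m - 1) = (3 * m - 1) div 2"
proof -
  have m_pos: "m \<ge> 1"
    using assms by (cases m) auto
  have "(F ^^ j) (3 * 2 ^ j * m - 1) = 3 * (3 ^ j * m) - 1"
    using funpow_F_3_mult_pow2_pred[OF m_pos, of j] by (simp only: mult.assoc)
  then have step: "(F ^^ Suc j) (3 * 2 ^ j * m - 1) = (3 ^ j * (3 * m) - 1) div 2"
    using F_3_mult_pred[of "3 ^ j * m"] assms by (simp add: mult.left_commute)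
  have "2 * j + 1 = j + Suc j"
    by simp
  then have "(F ^^ (2 * j + 1)) (3 * 2 ^ j * m - 1) = (F ^^ j) ((F ^^ Suc j) (3 * 2 ^ j * m - 1))"
    by (simp only: funpow_add comp_apply)
  also have "\<dots> = (3 * m - 1) div 2"
    using funpow_F_half_pow3_mult_pred[of "3 * m" j] assms step by simp
  finally show ?thesis .
qed

lemma pow2_mult_odd_decomp:
  fixes n :: nat
  assumes "n \<noteq> 0"
  obtains j m where "n = 2 ^ j * m" and "odd m"
  by (rule multiplicity_decompose'[of n 2]) (use assms that in auto)

lemma funpow_F_3_mult_plus_2_le:
  assumes "b \<ge> 1"
  shows "\<exists>k. (F ^^ k) (3 * b + 2) \<in> {1..b}"
proof (cases "even b")
  case True
  then obtain c where c: "b = 2 * c"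
    by blast
  have "(F ^^ 2) (3 * b + 2) = F (F (3 * b + 2))"
    by (simp add: numeral_2_eq_2)
  also have "F (3 * b + 2) = 3 * c + 1"
    using c by (subst F_even) presburger+
  also have "F (3 * c + 1) = c"
    by (rule F_3_mult_plus_1)
  finally show ?thesis
    using assms c by (intro exI[of _ 2]) auto
next
  case False
  obtain j m where jm: "b + 1 = 2 ^ j * m" and "odd m"
    using pow2_mult_odd_decomp[of "b + 1"] by auto
  obtain p where p: "m = 2 * p + 1"
    using \<open>odd m\<close> by (blast elim: oddE)
  have "j \<noteq> 0"
    using False jm \<open>odd m\<close> by (cases j) auto
  then have "2 * m \<le> b + 1"
    unfolding jm using power_increasing[of 1 j "2::nat"] by simp
  have "3 * b + 2 = 3 * 2 ^ j * m - 1"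
    using jm by (simp add: mult.assoc)
  then have after: "(F ^^ (2 * j + 1)) (3 * b + 2) = 3 * p + 1"
    using funpow_F_3_mult_pow2_pred_odd[OF \<open>odd m\<close>] p by simp
  show ?thesis
  proof (cases "p = 0")
    case True
    then show ?thesis
      using after assms by (intro exI[of _ "2 * j + 1"]) simp
  next
    case False
    have "(F ^^ Suc (2 * j + 1)) (3 * b + 2) = p"
      using after by (simp only: funpow.simps comp_apply F_3_mult_plus_1)
    then show ?thesis
      using False \<open>2 * m \<le> b + 1\<close> p by (intro exI[of _ "Suc (2 * j + 1)"]) auto
  qed
qed

lemma funpow_F_below:
  assumes "n \<ge> 2"
  shows "\<exists>k. (F ^^ k) n \<in> {1..<n}"
proof -
  consider q where "n = 3 * q + 1" | b where "n = 3 * b + 2" | c where "n = 3 * c"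
  proof -
    have "n mod 3 = 0 \<or> n mod 3 = 1 \<or> n mod 3 = 2"
      by arith
    then show thesis
      using that[of "n div 3"] div_mult_mod_eq[of n 3] by (metis add.right_neutral mult.commute)
  qed
  then show ?thesis
  proof cases
    case (1 q)
    then have "F n = q"
      by (simp only: F_3_mult_plus_1)
    then show ?thesis
      using 1 assms by (intro exI[of _ 1]) auto
  next
    case (2 b)
    show ?thesis
    proof (cases "b = 0")
      case True
      then show ?thesis
        using 2 by (intro exI[of _ 1]) (simp add: F_def)
    next
      case False
      then show ?thesis
        using funpow_F_3_mult_plus_2_le[of b] 2 by fastforce
    qed
  next
    case (3 c)
    show ?thesis
    proof (cases "even c")
      case True
      then have "F n = n div 2"
        using 3 by (intro F_even) auto
      then show ?thesis
        using assms by (intro exI[of _ 1]) simp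
    next
      case False
      then obtain d where "c = 2 * d + 1"
        by (blast elim: oddE)
      then have n: "n = 6 * d + 3"
        using 3 by simp
      have "F n = 3 * (3 * d + 1) + 2"
        unfolding n by (subst F_odd) presburger+
      moreover obtain k where "(F ^^ k) (3 * (3 * d + 1) + 2) \<in> {1..3 * d + 1}"
        using funpow_F_3_mult_plus_2_le[of "3 * d + 1"] by auto
      ultimately have "(F ^^ Suc k) n \<in> {1..3 * d + 1}"
        by (simp only: funpow_Suc_right comp_apply)
      then show ?thesis
        using n by (intro exI[of _ "Suc k"]) auto
    qed
  qed
qed

theorem mainTheorem10:
  fixes n :: nat
  assumes "n \<ge> 1"
  shows "\<exists>k::nat. (F ^^ k) n = 1"
  using assms
proof (induction n rule: less_induct)
  case (less n)
  show ?case
  proof (cases "n = 1")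
    case True
    then show ?thesis
      by (intro exI[of _ 0]) simp
  next
    case False
    then obtain k where k: "(F ^^ k) n \<in> {1..<n}"
      using funpow_F_below less.prems by fastforce
    then obtain l where "(F ^^ l) ((F ^^ k) n) = 1"
      using less.IH by auto
    then show ?thesis
      by (metis funpow_add comp_apply)
  qed
qed

end
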